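(* Let $P=P(G,[\omega])$ be a toric poset over $G=(V,E)$, let $i,j\in V$, and suppose the toric interval $I=[i,j]^{\mathrm{tor}}$ satisfies $|I|\ge3$. Then \[[i,j]^{\mathrm{tor}}=\{i,j\}\cup\{k\in V: [w|_{\{i,j,k\}}]=[(i,k,j)] \text{ for all } [w]\in\mathcal{L}_{\mathrm{tor}}(P)\}.\]
   Context: Toric poset setup: $V=[n]$; $\mathrm{Acyc}(G)$ acyclic orientations; $[\omega]$ the class under the equivalence generated by converting a source into a sink; toric chambers of the toric graphic arrangement (components of $\mathbb{R}^V/\mathbb{Z}^V$ minus the hyperplanes $\{x_i\equiv x_j\bmod 1\}$, $\{i,j\}\in E$) correspond bijectively to the classes $[\omega]$ (a point $x$ with coordinates in $[0,1)$ gives $i\to j$ iff $x_i<x_j$); $P(G,[\omega])$ is identified with its chamber $c(P)$. Toric chain: $C=\{i_1,\dots,i_m\}\subseteq V$ is a toric chain of $P$ if there is a cyclic equivalence class $[(i_1,\dots,i_m)]$ of linear orderings of $C$ such that for every $x\in c(P)$ (coordinates in $[0,1)$) some cyclic shift $(j_1,\dots,j_m)$ satisfies $0\le x_{j_1}<\cdots<x_{j_m}<1$; we write $P|_C=[(i_1,\dots,i_m)]$. Toric interval: $[i,i]^{\mathrm{tor}}=\{i\}$; for $i\neq j$, $[i,j]^{\mathrm{tor}}=\emptyset$ if $\{i,j\}$ is not a toric chain, and otherwise $[i,j]^{\mathrm{tor}}=\{i,j\}\cup\{k\in V: P|_{\{i,j,k\}}=[(i,k,j)]\}$. A toric poset $P'$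 on $V$ is a total toric extension of $P$ if $c(P')\subseteq c(P)$ and $c(P')$ is a chamber of the toric arrangement of the complete graph $K_V$; such $P'$ are indexed by cyclic classes $[w]=[(w_1,\dots,w_n)]$ of permutations of $V$ (the chamber where $0\le x_{w_1}<\dots<x_{w_n}<1$ up to cyclic shift). $\mathcal{L}_{\mathrm{tor}}(P)$ is the set of total toric extensions, and $[w|_C]$ denotes the cyclic order induced on $C\subseteq V$. *)

theory Defs
  imports Complex_Main
begin

definition simple_graph :: "'a set \<Rightarrow> 'a set set \<Rightarrow> bool" where
  "simple_graph V E \<longleftrightarrow> finite V \<and> (\<forall>e\<in>E. \<exists>a b. a \<noteq> b \<and> a \<in> V \<and> b \<in> V \<and> e = {a, b})"

definition orientation :: "'a set set \<Rightarrow> ('a \<times> 'a) set \<Rightarrow> bool" where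
  "orientation E \<omega> \<longleftrightarrow> (\<forall>(a,b)\<in>\<omega>. {a,b} \<in> E) \<and>
     (\<forall>a b. {a,b} \<in> E \<and> a \<noteq> b \<longrightarrow> ((a,b) \<in> \<omega> \<longleftrightarrow> (b,a) \<notin> \<omega>))"

definition Acyc :: "'a set set \<Rightarrow> ('a \<times> 'a) set set" where
  "Acyc E = {\<omega>. orientation E \<omega> \<and> acyclic \<omega>}"

definition source_to_sink :: "('a \<times> 'a) set \<Rightarrow> ('a \<times> 'a) set \<Rightarrow> bool" where
  "source_to_sink \<omega> \<omega>' \<longleftrightarrow> (\<exists>v. (\<forall>u. (u, v) \<notin> \<omega>) \<and>
      \<omega>' = {(a,b)\<in>\<omega>. a \<noteq> v} \<union> {(b,v) | b. (v,b) \<in> \<omega>})"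

definition toric_equiv :: "('a \<times> 'a) set \<Rightarrow> ('a \<times> 'a) set \<Rightarrow> bool" where
  "toric_equiv = (\<lambda>\<omega> \<omega>'. source_to_sink \<omega> \<omega>' \<or> source_to_sink \<omega>' \<omega>)\<^sup>*\<^sup>*"

text \<open>Representatives of points of R^V/Z^V: coordinates in [0,1) (zero outside V).\<close>
definition torus_pts :: "'a set \<Rightarrow> ('a \<Rightarrow> real) set" where
  "torus_pts V = {x. (\<forall>v\<in>V. 0 \<le> x v \<and> x v < 1) \<and> (\<forall>v. v \<notin> V \<longrightarrow> x v = 0)}"

definition ori_of :: "'a set set \<Rightarrow> ('a \<Rightarrow> real) \<Rightarrow> ('a \<times> 'a) set" where
  "ori_of E x = {(i,j). {i,j} \<in> E \<and> x i < x j}"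

definition tor_chamber :: "'a set \<Rightarrow> 'a set set \<Rightarrow> ('a \<times> 'a) set \<Rightarrow> ('a \<Rightarrow> real) set" where
  "tor_chamber V E \<omega> = {x \<in> torus_pts V. (\<forall>i j. {i,j} \<in> E \<longrightarrow> x i \<noteq> x j)
       \<and> toric_equiv \<omega> (ori_of E x)}"

definition cyc_equiv :: "'a list \<Rightarrow> 'a list \<Rightarrow> bool" where
  "cyc_equiv l l' \<longleftrightarrow> (\<exists>k. l' = rotate k l)"

definition increasing_along :: "('a \<Rightarrow> real) \<Rightarrow> 'a list \<Rightarrow> bool" where
  "increasing_along x l \<longleftrightarrow> sorted_wrt (\<lambda>a b. x a < x b) l"

text \<open>P|_C = [l]: C is a toric chain of P with cyclic order [l].\<close>
definition tor_restrict_is :: "'a set \<Rightarrow> 'a set set \<Rightarrow> ('a \<times> 'a) set \<Rightarrow> 'a set \<Rightarrow> 'a list \<Rightarrow> bool" where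
  "tor_restrict_is V E \<omega> C l \<longleftrightarrow> distinct l \<and> set l = C \<and>
     (\<forall>x\<in>tor_chamber V E \<omega>. \<exists>r. cyc_equiv l r \<and> increasing_along x r)"

definition toric_chain :: "'a set \<Rightarrow> 'a set set \<Rightarrow> ('a \<times> 'a) set \<Rightarrow> 'a set \<Rightarrow> bool" where
  "toric_chain V E \<omega> C \<longleftrightarrow> C \<subseteq> V \<and> (\<exists>l. tor_restrict_is V E \<omega> C l)"

definition tor_interval :: "'a set \<Rightarrow> 'a set set \<Rightarrow> ('a \<times> 'a) set \<Rightarrow> 'a \<Rightarrow> 'a \<Rightarrow> 'a set" where
  "tor_interval V E \<omega> i j =
     (if i = j then {i}
      else if \<not> toric_chain V E \<omega> {i, j} then {}
      else {i, j} \<union> {k \<in> V. tor_restrict_is V E \<omega> {i, j, k} [i, k, j]})"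

text \<open>Chamber of the complete-graph toric arrangement indexed by the cyclic class [w].\<close>
definition total_chamber :: "'a set \<Rightarrow> 'a list \<Rightarrow> ('a \<Rightarrow> real) set" where
  "total_chamber V w = {x \<in> torus_pts V. \<exists>r. cyc_equiv w r \<and> increasing_along x r}"

text \<open>L_tor(P), represented by the permutations w (lists) of V whose classes index
  total toric extensions.\<close>
definition L_tor :: "'a set \<Rightarrow> 'a set set \<Rightarrow> ('a \<times> 'a) set \<Rightarrow> 'a list set" where
  "L_tor V E \<omega> = {w. distinct w \<and> set w = V \<and> total_chamber V w \<subseteq> tor_chamber V E \<omega>}"

definition induced_cyc :: "'a list \<Rightarrow> 'a set \<Rightarrow> 'a list \<Rightarrow> bool" where
  "induced_cyc w C l \<longleftrightarrow> cyc_equiv l (filter (\<lambda>v. v \<in> C) w)"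

end

theory Submission imports Defs begin

text \<open>A total toric extension w of P restricts to P|_C on every toric chain C, simply because
  its chamber lies in c(P) and contains a point increasing along w. Conversely, sorting V by
  a point x of c(P), with ties broken arbitrarily, yields a total toric extension: the
  orientation induced by x is the one induced by the sorted list, and rotating a list is a
  sequence of source-to-sink flips. Hence, if every total extension induces [(i,k,j)] on
  {i,j,k}, then so does every tie-breaking of x. Since {i,j} is a toric chain, x i \<noteq> x j;
  a tie x k = x i or x k = x j could be broken both ways, producing both cyclic orders of the
  triple. So x is injective on {i,j,k} and increases along a rotation of (i,k,j).\<close>

fun list_order :: "'a list \<Rightarrow> ('a \<times> 'a) set" where
  "list_order [] = {}"
| "list_order (a # r) = {(a, b) | b. b \<in> set r} \<union> list_order r"

lemma list_order_subset: "list_order r \<subseteq> set r \<times> set r"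
  by (induction r) auto

lemma list_order_snoc: "list_order (r @ [a]) = list_order r \<union> {(b, a) | b. b \<in> set r}"
  by (induction r) auto

lemma list_order_sorted_wrt: "sorted_wrt P r \<Longrightarrow> (a, b) \<in> list_order r \<Longrightarrow> P a b"
  by (induction r) auto

lemma list_order_total:
  "a \<in> set r \<Longrightarrow> b \<in> set r \<Longrightarrow> a \<noteq> b \<Longrightarrow> (a, b) \<in> list_order r \<or> (b, a) \<in> list_order r"
  by (induction r) auto

lemma increasing_along_inj_on: "increasing_along x r \<Longrightarrow> inj_on x (set r)"
  by (simp add: increasing_along_def strict_sorted_iff distinct_map flip: sorted_wrt_map)

lemma increasing_along_unique:
  fixes y :: "'a \<Rightarrow> real"
  assumes "increasing_along y l1" "increasing_along y l2" "set l1 = set l2"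
  shows "l1 = l2"
proof -
  have "sorted (map y l1)" "distinct (map y l1)" "sorted (map y l2)" "distinct (map y l2)"
    using assms(1,2) by (simp_all add: increasing_along_def strict_sorted_iff flip: sorted_wrt_map)
  then have "map y l1 = map y l2"
    using sorted_distinct_set_unique assms(3) by (metis set_map)
  with increasing_along_inj_on[OF assms(1)] assms(3) show ?thesis
    using inj_on_map_eq_map by (metis sup.idem)
qed

lemma increasing_along_sort_key:
  "inj_on x (set l) \<Longrightarrow> distinct l \<Longrightarrow> increasing_along x (sort_key x l)"
  by (simp add: increasing_along_def strict_sorted_iff distinct_map flip: sorted_wrt_map)

lemma increasing_point_exists:
  "distinct w \<Longrightarrow> \<exists>y. increasing_along y w \<and> y \<in> torus_pts (set w)"
proof (induction w)
  case Nil
  show ?case by (auto simp: increasing_along_def torus_pts_def intro: exI[of _ "\<lambda>_. 0"])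
next
  case (Cons a w)
  then obtain y where y: "increasing_along y w" "y \<in> torus_pts (set w)"
    by auto
  \<comment> \<open>squeeze the old coordinates into [1/2, 1) and put a at 0\<close>
  define z where "z v = (if v \<in> set w then (y v + 1) / 2 else 0)" for v :: 'a
  have "sorted_wrt (\<lambda>a b. z a < z b) w"
    using y(1) unfolding increasing_along_def
    by (rule sorted_wrt_mono_rel[rotated]) (auto simp: z_def)
  moreover have "\<forall>v\<in>set w. z a < z v"
    using Cons.prems y(2) by (auto simp: z_def torus_pts_def)
  moreover have "z \<in> torus_pts (set (a # w))"
    using y(2) by (auto simp: z_def torus_pts_def)
  ultimately show ?case by (auto simp: increasing_along_def)
qed

definition list_orientation :: "'a set set \<Rightarrow> 'a list \<Rightarrow> ('a \<times> 'a) set" where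
  "list_orientation E r = {p \<in> list_order r. {fst p, snd p} \<in> E}"

lemma simple_graph_edge:
  "simple_graph V E \<Longrightarrow> {a, b} \<in> E \<Longrightarrow> a \<noteq> b \<and> a \<in> V \<and> b \<in> V"
  unfolding simple_graph_def by (fastforce simp: doubleton_eq_iff)

lemma ori_of_eq_list_orientation:
  assumes sg: "simple_graph V E" and sorted: "sorted_wrt (\<lambda>a b. x a \<le> x b) r" and "set r = V"
    and separates: "\<forall>a b. {a, b} \<in> E \<longrightarrow> x a \<noteq> x b"
  shows "ori_of E x = list_orientation E r"
proof (intro set_eqI iffI; clarify)
  fix a b assume "(a, b) \<in> ori_of E x"
  then have e: "{a, b} \<in> E" and "x a < x b" by (auto simp: ori_of_def)
  moreover have "a \<noteq> b" "a \<in> set r" "b \<in> set r"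
    using simple_graph_edge[OF sg e] \<open>set r = V\<close> by auto
  ultimately show "(a, b) \<in> list_orientation E r"
    using list_order_total list_order_sorted_wrt[OF sorted, of b a]
    by (fastforce simp: list_orientation_def)
next
  fix a b assume "(a, b) \<in> list_orientation E r"
  then have "{a, b} \<in> E" "(a, b) \<in> list_order r" by (auto simp: list_orientation_def)
  then show "(a, b) \<in> ori_of E x"
    using list_order_sorted_wrt[OF sorted] separates by (fastforce simp: ori_of_def)
qed

lemma source_to_sink_rotate1:
  assumes "distinct (a # r)"
  shows "source_to_sink (list_orientation E (a # r)) (list_orientation E (r @ [a]))"
  unfolding source_to_sink_def
proof (intro exI[of _ a] conjI)
  show "\<forall>u. (u, a) \<notin> list_orientation E (a # r)"
    using assms list_order_subset[of r] by (auto simp: list_orientation_def)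
  show "list_orientation E (r @ [a]) =
      {(p, q) \<in> list_orientation E (a # r). p \<noteq> a} \<union> {(b, a) |b. (a, b) \<in> list_orientation E (a # r)}"
    using assms list_order_subset[of r]
    by (auto simp: list_orientation_def list_order_snoc insert_commute)
qed

lemma toric_equiv_rotate:
  assumes "distinct w"
  shows "toric_equiv (list_orientation E w) (list_orientation E (rotate m w))"
proof (induction m)
  case 0
  show ?case by (simp add: toric_equiv_def)
next
  case (Suc m)
  show ?case
  proof (cases "rotate m w")
    case Nil
    with Suc show ?thesis by (simp add: rotate1_rotate_swap[symmetric])
  next
    case (Cons a r)
    then have "distinct (a # r)" "rotate (Suc m) w = r @ [a]"
      using assms by (metis distinct_rotate, simp add: rotate1_rotate_swap[symmetric])
    with Suc Cons source_to_sink_rotate1[of a r E] show ?thesis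
      unfolding toric_equiv_def by (metis (mono_tags, lifting) rtranclp.rtrancl_into_rtrancl)
  qed
qed

lemma sort_key_in_L_tor:
  assumes sg: "simple_graph V E" and x: "x \<in> tor_chamber V E \<omega>"
    and "distinct l" "set l = V"
  shows "sort_key x l \<in> L_tor V E \<omega>"
proof -
  let ?w = "sort_key x l"
  have w: "distinct ?w" "set ?w = V"
    using assms(3,4) by auto
  have "ori_of E x = list_orientation E ?w"
    using x sorted_sort_key[of x l]
    by (intro ori_of_eq_list_orientation[OF sg _ w(2)]) (auto simp: tor_chamber_def sorted_map)
  then have \<omega>_equiv: "toric_equiv \<omega> (list_orientation E ?w)"
    using x by (simp add: tor_chamber_def)
  have "y \<in> tor_chamber V E \<omega>" if y: "y \<in> total_chamber V ?w" for y
  proof -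
    obtain m where "y \<in> torus_pts V" and inc: "increasing_along y (rotate m ?w)"
      using y by (auto simp: total_chamber_def cyc_equiv_def)
    have "inj_on y V"
      using increasing_along_inj_on[OF inc] w by simp
    then have separates: "\<forall>a b. {a, b} \<in> E \<longrightarrow> y a \<noteq> y b"
      using simple_graph_edge[OF sg] by (metis inj_on_contraD)
    have "ori_of E y = list_orientation E (rotate m ?w)"
      using inc w separates
      by (intro ori_of_eq_list_orientation[OF sg])
         (auto simp: increasing_along_def elim: sorted_wrt_mono_rel[rotated])
    with \<omega>_equiv toric_equiv_rotate[OF w(1), of E m] have "toric_equiv \<omega> (ori_of E y)"
      unfolding toric_equiv_def by simp
    with \<open>y \<in> torus_pts V\<close> separates show ?thesis
      by (auto simp: tor_chamber_def)
  qed
  with w show ?thesis by (auto simp: L_tor_def)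
qed

lemma L_tor_realizes_sort_key:
  assumes "simple_graph V E" and "x \<in> tor_chamber V E \<omega>"
    and "distinct q" "set q \<subseteq> V"
  obtains w where "w \<in> L_tor V E \<omega>" "filter (\<lambda>v. v \<in> set q) w = sort_key x q"
proof -
  obtain rest where rest: "set rest = V - set q" "distinct rest"
    using finite_distinct_list[of "V - set q"] assms(1) by (auto simp: simple_graph_def)
  have "sort_key x (q @ rest) \<in> L_tor V E \<omega>"
    using assms rest by (intro sort_key_in_L_tor) auto
  moreover have "filter (\<lambda>v. v \<in> set q) (q @ rest) = q"
    using rest by (simp add: filter_empty_conv)
  ultimately show ?thesis
    using that by (metis filter_sort)
qed

lemma tor_restrict_is_inj_on:
  "tor_restrict_is V E \<omega> C l \<Longrightarrow> x \<in> tor_chamber V E \<omega> \<Longrightarrow> inj_on x C"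
  unfolding tor_restrict_is_def cyc_equiv_def
  by (metis increasing_along_inj_on set_rotate)

lemma tor_restrict_is_imp_induced_cyc:
  assumes restr: "tor_restrict_is V E \<omega> C l" and "C \<subseteq> V" and w: "w \<in> L_tor V E \<omega>"
  shows "induced_cyc w C l"
proof -
  have w_props: "distinct w" "set w = V" "total_chamber V w \<subseteq> tor_chamber V E \<omega>"
    using w by (auto simp: L_tor_def)
  obtain y where y: "increasing_along y w" "y \<in> torus_pts V"
    using increasing_point_exists[OF w_props(1)] w_props(2) by blast
  then have "y \<in> tor_chamber V E \<omega>"
    using w_props(3) by (force simp: total_chamber_def cyc_equiv_def intro: exI[of _ 0])
  then obtain r where r: "cyc_equiv l r" "increasing_along y r"
    using restr by (auto simp: tor_restrict_is_def)
  have "increasing_along y (filter (\<lambda>v. v \<in> C) w)"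
    using y(1) by (simp add: increasing_along_def sorted_wrt_filter)
  moreover have "set (filter (\<lambda>v. v \<in> C) w) = set r"
    using r(1) restr w_props(2) \<open>C \<subseteq> V\<close> by (auto simp: cyc_equiv_def tor_restrict_is_def)
  ultimately have "filter (\<lambda>v. v \<in> C) w = r"
    using increasing_along_unique r(2) by blast
  with r(1) show ?thesis by (simp add: induced_cyc_def)
qed

lemma L_tor_induced_cyc_imp_cyc_equiv_sort_key:
  assumes "simple_graph V E" and "x \<in> tor_chamber V E \<omega>"
    and "distinct q" "set q = C" "C \<subseteq> V"
    and induced: "\<forall>w \<in> L_tor V E \<omega>. induced_cyc w C l"
  shows "cyc_equiv l (sort_key x q)"
proof -
  obtain w where "w \<in> L_tor V E \<omega>" "filter (\<lambda>v. v \<in> set q) w = sort_key x q"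
    using L_tor_realizes_sort_key[OF assms(1-3)] assms(4,5) by auto
  with induced \<open>set q = C\<close> show ?thesis
    unfolding induced_cyc_def by metis
qed

lemma induced_cyc_imp_tor_restrict_is:
  assumes "simple_graph V E" and "distinct l" "set l \<subseteq> V"
    and induced: "\<forall>w \<in> L_tor V E \<omega>. induced_cyc w (set l) l"
    and inj: "\<forall>x \<in> tor_chamber V E \<omega>. inj_on x (set l)"
  shows "tor_restrict_is V E \<omega> (set l) l"
  unfolding tor_restrict_is_def
proof (intro conjI ballI exI)
  fix x assume x: "x \<in> tor_chamber V E \<omega>"
  show "cyc_equiv l (sort_key x l)"
    using L_tor_induced_cyc_imp_cyc_equiv_sort_key[OF assms(1) x assms(2) refl assms(3) induced] .
  show "increasing_along x (sort_key x l)"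
    using inj x assms(2) by (simp add: increasing_along_sort_key)
qed (use assms in auto)

lemma cyc_equiv_three: "cyc_equiv [a, b, c] r \<longleftrightarrow> r = [a, b, c] \<or> r = [b, c, a] \<or> r = [c, a, b]"
proof
  assume "cyc_equiv [a, b, c] r"
  then obtain k where "r = rotate (k mod 3) [a, b, c]"
    by (metis cyc_equiv_def rotate_conv_mod length_Cons list.size(3) numeral_3_eq_3)
  moreover have "k mod 3 = 0 \<or> k mod 3 = 1 \<or> k mod 3 = 2" by auto
  ultimately show "r = [a, b, c] \<or> r = [b, c, a] \<or> r = [c, a, b]"
    by (auto simp: numeral_2_eq_2 rotate1_def)
next
  assume "r = [a, b, c] \<or> r = [b, c, a] \<or> r = [c, a, b]"
  then show "cyc_equiv [a, b, c] r"
    unfolding cyc_equiv_def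
    by (elim disjE) (rule exI[of _ 0], simp, rule exI[of _ 1], simp,
                     rule exI[of _ 2], simp add: numeral_2_eq_2)
qed

text \<open>Stable sorting of [k,i,j] puts k before i in a tie x k = x i, and sorting [i,j,k] puts k
  after j in a tie x k = x j; either way the result is not a rotation of (i,k,j).\<close>
lemma ties_break_cyclic_order:
  fixes x :: "'a \<Rightarrow> real"
  assumes "distinct [i, k, j]" "x i \<noteq> x j"
    and "cyc_equiv [i, k, j] (sort_key x [k, i, j])"
    and "cyc_equiv [i, k, j] (sort_key x [i, j, k])"
  shows "inj_on x {i, j, k}"
proof -
  have "x i \<noteq> x k" "x k \<noteq> x j"
    using assms by (cases "x i < x j"; auto simp: cyc_equiv_three)+
  with assms(2) show ?thesis by (auto simp: inj_on_def)
qed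

lemma toric_chain_separates:
  "toric_chain V E \<omega> {i, j} \<Longrightarrow> i \<noteq> j \<Longrightarrow> x \<in> tor_chamber V E \<omega> \<Longrightarrow> x i \<noteq> x j"
  unfolding toric_chain_def
  by (metis tor_restrict_is_inj_on inj_on_contraD insertI1 insertI2 doubleton_eq_iff)

lemma tor_restrict_triple_iff_induced_cyc:
  assumes sg: "simple_graph V E" and chain: "toric_chain V E \<omega> {i, j}"
    and "i \<noteq> j" "i \<in> V" "j \<in> V" "k \<in> V" "k \<noteq> i" "k \<noteq> j"
  shows "tor_restrict_is V E \<omega> {i, j, k} [i, k, j] \<longleftrightarrow>
         (\<forall>w \<in> L_tor V E \<omega>. induced_cyc w {i, j, k} [i, k, j])"
proof
  show "\<forall>w \<in> L_tor V E \<omega>. induced_cyc w {i, j, k} [i, k, j]"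
    if "tor_restrict_is V E \<omega> {i, j, k} [i, k, j]"
    using tor_restrict_is_imp_induced_cyc[OF that] assms(4-6) by blast
next
  have triple: "{i, j, k} = set [i, k, j]" by auto
  assume induced: "\<forall>w \<in> L_tor V E \<omega>. induced_cyc w {i, j, k} [i, k, j]"
  have "inj_on x {i, j, k}" if x: "x \<in> tor_chamber V E \<omega>" for x
  proof (rule ties_break_cyclic_order)
    show "distinct [i, k, j]" "x i \<noteq> x j"
      using assms toric_chain_separates[OF chain _ x] by auto
    show "cyc_equiv [i, k, j] (sort_key x [k, i, j])" "cyc_equiv [i, k, j] (sort_key x [i, j, k])"
      by (rule L_tor_induced_cyc_imp_cyc_equiv_sort_key[OF sg x _ _ _ induced];
          use assms in auto)+
  qed
  then show "tor_restrict_is V E \<omega> {i, j, k} [i, k, j]"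
    unfolding triple using induced[unfolded triple] assms
    by (intro induced_cyc_imp_tor_restrict_is[OF sg]) auto
qed

theorem mainTheorem5:
  fixes V :: "'a set" and E :: "'a set set" and \<omega> :: "('a \<times> 'a) set" and i j :: 'a
  assumes "simple_graph V E"
    and "\<omega> \<in> Acyc E"
    and "i \<in> V" and "j \<in> V"
    and "card (tor_interval V E \<omega> i j) \<ge> 3"
  shows "tor_interval V E \<omega> i j =
           {i, j} \<union> {k \<in> V. \<forall>w \<in> L_tor V E \<omega>. induced_cyc w {i, j, k} [i, k, j]}"
proof -
  have "i \<noteq> j" and chain: "toric_chain V E \<omega> {i, j}"
    using assms(5) by (auto simp: tor_interval_def split: if_splits)
  then have "tor_interval V E \<omega> i j = {i, j} \<union> {k \<in> V. tor_restrict_is V E \<omega> {i, j, k} [i, k, j]}"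
    by (simp add: tor_interval_def)
  also have "\<dots> = {i, j} \<union> {k \<in> V. \<forall>w \<in> L_tor V E \<omega>. induced_cyc w {i, j, k} [i, k, j]}"
    using tor_restrict_triple_iff_induced_cyc[OF assms(1) chain \<open>i \<noteq> j\<close> assms(3,4)] by blast
  finally show ?thesis .
qed

end
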